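(* Let $I\subset(0,\infty)$ be an interval and let $f:I\to\mathbb{R}$ be differentiable on the interior $I^\circ$ of $I$. Let $m\in(0,1]$, $\alpha\in[0,1]$, $q\ge 1$ and $0<\theta\le 1$, and let $a,b$ be real numbers with $a<b$ and $a,\,b/m\in I^\circ$, such that $f'\in L[a,b]$. Suppose that $|f'|^q$ is harmonically $(\alpha,m)$-convex on $[a,b/m]$. Then $$\left|I_f(g;\theta,a,b)\right|\le \frac{ab(b-a)}{2}\,C_4(\theta;a,b)^{1-1/q}\left[C_5(\theta;\alpha;a,b)\,|f'(a)|^q+m\,C_6(\theta;\alpha;a,b)\,|f'(b/m)|^q\right]^{1/q},$$ where $$C_4(\theta;a,b)=\frac{b^{-2}}{\theta+1}\,{}_2F_1\!\left(2,1;\theta+2;1-\tfrac{a}{b}\right)-\frac{b^{-2}}{\theta+1}\,{}_2F_1\!\left(2,\theta+1;\theta+2;1-\tfrac{a}{b}\right)+\left(\frac{a+b}{2}\right)^{-2}\frac{1}{\theta+1}\,{}_2F_1\!\left(2,\theta+1;\theta+2;\tfrac{b-a}{b+a}\right),$$ $$C_5(\theta;\alpha;a,b)=\frac{b^{-2}}{\theta+\alpha+1}\,{}_2F_1\!\left(2,1;\theta+\alpha+2;1-\tfrac{a}{b}\right)-\frac{\beta(\theta+1,\alpha+1)}{b^{2}}\,{}_2F_1\!\left(2,\theta+1;\theta+\alpha+2;1-\tfrac{a}{b}\right)+\frac{\beta(\theta+1,\alpha+1)}{(a+b)^2\,2^{\alpha-2}}\,{}_2F_1\!\left(2,\theta+1;\theta+\alpha+2;\tfrac{b-a}{b+a}\right),$$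 $$C_6(\theta;\alpha;a,b)=C_4(\theta;a,b)-C_5(\theta;\alpha;a,b).$$
   Context: A function $h:J\to\mathbb{R}$ on an interval $J\subset(0,\infty)$ is called harmonically $(\alpha,m)$-convex (with $\alpha\in[0,1]$, $m\in(0,1]$) if $h\left(\frac{mxy}{mty+(1-t)x}\right)\le t^{\alpha}h(x)+m(1-t^{\alpha})h(y)$ for all $x,y\in J$ and $t\in[0,1]$ (for which the left-hand side is defined, i.e. the argument lies in $J$). For $\varphi\in L[c,d]$ and $\theta>0$ the Riemann–Liouville integrals are $J^{\theta}_{c+}\varphi(x)=\frac{1}{\Gamma(\theta)}\int_c^x (x-t)^{\theta-1}\varphi(t)\,dt$ for $x>c$ and $J^{\theta}_{d-}\varphi(x)=\frac{1}{\Gamma(\theta)}\int_x^d (t-x)^{\theta-1}\varphi(t)\,dt$ for $x<d$, where $\Gamma$ is the Euler Gamma function. With $g(x)=1/x$, define $$I_f(g;\theta,a,b)=\frac{f(a)+f(b)}{2}-\frac{\Gamma(\theta+1)}{2}\left(\frac{ab}{b-a}\right)^{\theta}\left\{J^{\theta}_{1/a-}(f\circ g)(1/b)+J^{\theta}_{1/b+}(f\circ g)(1/a)\right\}.$$ $\beta(x,y)=\int_0^1 t^{x-1}(1-t)^{y-1}dt$ ($x,y>0$) is the Beta function, and the hypergeometric function is ${}_2F_1(a,b;c;z)=\frac{1}{\beta(b,c-b)}\int_0^1 t^{b-1}(1-t)^{c-b-1}(1-zt)^{-a}dt$ for $c>b>0$, $|z|<1$. *)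

theory Defs
  imports "HOL-Analysis.Analysis"
begin

definition tpow :: "real \<Rightarrow> real \<Rightarrow> real" where
  "tpow t \<alpha> = (if \<alpha> = 0 then 1 else t powr \<alpha>)"

definition harm_alpha_m_convex_on :: "real set \<Rightarrow> real \<Rightarrow> real \<Rightarrow> (real \<Rightarrow> real) \<Rightarrow> bool" where
  "harm_alpha_m_convex_on J \<alpha> m h \<longleftrightarrow>
     (\<forall>x\<in>J. \<forall>y\<in>J. \<forall>t\<in>{0..1}.
        m * x * y / (m * t * y + (1 - t) * x) \<in> J \<longrightarrow>
        h (m * x * y / (m * t * y + (1 - t) * x)) \<le> tpow t \<alpha> * h x + m * (1 - tpow t \<alpha>) * h y)"

definition RL_left :: "real \<Rightarrow> real \<Rightarrow> (real \<Rightarrow> real) \<Rightarrow> real \<Rightarrow> real" where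
  "RL_left \<theta> c \<phi> x = (1 / Gamma \<theta>) * integral {c..x} (\<lambda>t. (x - t) powr (\<theta> - 1) * \<phi> t)"

definition RL_right :: "real \<Rightarrow> real \<Rightarrow> (real \<Rightarrow> real) \<Rightarrow> real \<Rightarrow> real" where
  "RL_right \<theta> d \<phi> x = (1 / Gamma \<theta>) * integral {x..d} (\<lambda>t. (t - x) powr (\<theta> - 1) * \<phi> t)"

text \<open>I_f(g; theta, a, b) with g(x) = 1/x.\<close>
definition I_f :: "(real \<Rightarrow> real) \<Rightarrow> real \<Rightarrow> real \<Rightarrow> real \<Rightarrow> real" where
  "I_f f \<theta> a b = (f a + f b) / 2
     - Gamma (\<theta> + 1) / 2 * (a * b / (b - a)) powr \<theta>
       * (RL_right \<theta> (1 / a) (\<lambda>x. f (1 / x)) (1 / b) + RL_left \<theta> (1 / b) (\<lambda>x. f (1 / x)) (1 / a))"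

text \<open>Gauss hypergeometric function via Euler's integral (c > b > 0, |z| < 1).\<close>
definition hyp2F1 :: "real \<Rightarrow> real \<Rightarrow> real \<Rightarrow> real \<Rightarrow> real" where
  "hyp2F1 a b c z = (1 / Beta b (c - b)) *
     integral {0..1} (\<lambda>t. t powr (b - 1) * (1 - t) powr (c - b - 1) * (1 - z * t) powr (- a))"

definition C4 :: "real \<Rightarrow> real \<Rightarrow> real \<Rightarrow> real" where
  "C4 \<theta> a b =
     b powr (-2) / (\<theta> + 1) * hyp2F1 2 1 (\<theta> + 2) (1 - a / b)
   - b powr (-2) / (\<theta> + 1) * hyp2F1 2 (\<theta> + 1) (\<theta> + 2) (1 - a / b)
   + ((a + b) / 2) powr (-2) * (1 / (\<theta> + 1)) * hyp2F1 2 (\<theta> + 1) (\<theta> + 2) ((b - a) / (b + a))"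

definition C5 :: "real \<Rightarrow> real \<Rightarrow> real \<Rightarrow> real \<Rightarrow> real" where
  "C5 \<theta> \<alpha> a b =
     b powr (-2) / (\<theta> + \<alpha> + 1) * hyp2F1 2 1 (\<theta> + \<alpha> + 2) (1 - a / b)
   - Beta (\<theta> + 1) (\<alpha> + 1) / b\<^sup>2 * hyp2F1 2 (\<theta> + 1) (\<theta> + \<alpha> + 2) (1 - a / b)
   + Beta (\<theta> + 1) (\<alpha> + 1) / ((a + b)\<^sup>2 * 2 powr (\<alpha> - 2))
       * hyp2F1 2 (\<theta> + 1) (\<theta> + \<alpha> + 2) ((b - a) / (b + a))"

definition C6 :: "real \<Rightarrow> real \<Rightarrow> real \<Rightarrow> real \<Rightarrow> real" where
  "C6 \<theta> \<alpha> a b = C4 \<theta> a b - C5 \<theta> \<alpha> a b"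

end

theory Submission
  imports Defs
begin

text \<open>Put \<open>\<phi>(x) = f(1/x)\<close> on \<open>[1/b, 1/a]\<close>. Integrating \<open>\<phi>'\<close> against
  \<open>(x - 1/b)^\<theta> - (1/a - x)^\<theta>\<close> by parts produces exactly the two Riemann--Liouville
  integrals of \<open>I_f\<close>. Harmonic \<open>(\<alpha>,m)\<close>-convexity bounds \<open>|f'(1/x)|^q\<close> by an affine
  function of \<open>t^\<alpha>\<close>, where \<open>x = 1/b + t(1/a - 1/b)\<close>. Instead of the power-mean inequality
  we use Young's inequality \<open>d \<le> K^(1/q) (d^q/(qK) + 1 - 1/q)\<close> with a free scale \<open>K > 0\<close>;
  this makes the bound linear in two integrals of the kernel
  \<open>|(1-s)^\<theta> - s^\<theta>| (1-s)^e / ((1-s)b + sa)^2\<close>. They are dominated by \<open>C5\<close> and \<open>C6\<close>,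
  because \<open>C5\<close> is the same integral with the weight \<open>(1-s)^\<theta> - s^\<theta> + 2 (2s-1)\<^sub>+^\<theta>\<close>,
  which exceeds the absolute value by subadditivity of \<open>s \<mapsto> s^\<theta>\<close>. Minimising over \<open>K\<close>
  gives the stated product.\<close>

lemma Beta_pos_real: "(x::real) > 0 \<Longrightarrow> y > 0 \<Longrightarrow> Beta x y > 0"
  unfolding Beta_def by simp

lemma Beta_1_left_real:
  assumes "(y::real) > 0"
  shows "Beta 1 y = 1 / y"
proof -
  have "Gamma (y + 1) = y * Gamma y"
    using assms by (intro Gamma_plus1) (auto elim!: nonpos_Ints_cases)
  moreover have "Gamma y \<noteq> 0"
    using Gamma_real_pos[OF assms] by linarith
  ultimately show ?thesis
    using assms unfolding Beta_def by (simp add: add.commute)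
qed

lemma powr_reciprocal_le:
  fixes u q :: real
  assumes "0 \<le> u" "1 \<le> q"
  shows "u powr (1/q) \<le> u / q + 1 - 1/q"
proof (cases "u = 0")
  case True
  then show ?thesis using assms by simp
next
  case False
  then have u: "u > 0" using assms by simp
  have "u powr (1/q) = exp ((1/q) * ln u + (1 - 1/q) * ln 1)"
    using u by (simp add: powr_def)
  also have "\<dots> \<le> (1/q) * exp (ln u) + (1 - 1/q) * exp (ln 1)"
    using convex_onD[OF exp_convex, of "1 - 1/q" "ln u" "ln 1"] assms
    by (simp add: algebra_simps)
  finally show ?thesis using u by (simp add: algebra_simps)
qed

lemma le_Young_bound_of_powr_le:
  fixes d u q K :: real
  assumes "0 \<le> d" "d powr q \<le> u" "1 \<le> q" "0 < K"
  shows "d \<le> K powr (1/q) * (u / (q * K) + 1 - 1/q)"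
proof -
  have "0 \<le> u" using assms(2) powr_ge_zero order_trans by blast
  have "d = (d powr q) powr (1/q)" using assms by (simp add: powr_powr)
  also have "\<dots> \<le> u powr (1/q)" using assms by (intro powr_mono2) auto
  also have "\<dots> = K powr (1/q) * (u / K) powr (1/q)"
    using assms \<open>0 \<le> u\<close> by (simp add: powr_mult[symmetric])
  also have "\<dots> \<le> K powr (1/q) * (u / K / q + 1 - 1/q)"
    using powr_reciprocal_le[of "u/K" q] assms \<open>0 \<le> u\<close> by (intro mult_left_mono) auto
  finally show ?thesis by (simp add: mult.commute)
qed

lemma powr_add_le_add_powr:
  fixes x y t :: real
  assumes "0 \<le> x" "0 \<le> y" "0 < t" "t \<le> 1"
  shows "(x + y) powr t \<le> x powr t + y powr t"
proof (cases "x + y = 0")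
  case True
  then show ?thesis using assms by simp
next
  case False
  then have s: "x + y > 0" using assms by simp
  have "z / (x + y) \<le> (z / (x + y)) powr t" if "0 \<le> z" "z \<le> x + y" for z
    using powr_mono'[of t 1 "z / (x + y)"] assms s that by (cases "z = 0") auto
  then have "x / (x + y) + y / (x + y) \<le> (x / (x + y)) powr t + (y / (x + y)) powr t"
    using assms by (intro add_mono) auto
  moreover have "x / (x + y) + y / (x + y) = 1"
    using s by (simp add: add_divide_distrib[symmetric])
  moreover have "(x / (x + y)) powr t + (y / (x + y)) powr t = (x powr t + y powr t) / (x + y) powr t"
    using assms s by (simp add: powr_divide add_divide_distrib)
  ultimately show ?thesis using s by (simp add: field_simps)
qed

lemma abs_powr_diff_le:
  fixes s \<theta> :: real
  assumes s: "0 \<le> s" "s \<le> 1" and \<theta>: "0 < \<theta>" "\<theta> \<le> 1"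
  shows "\<bar>(1 - s) powr \<theta> - s powr \<theta>\<bar> \<le> (1 - s) powr \<theta> - s powr \<theta> + 2 * (max 0 (2 * s - 1)) powr \<theta>"
proof (cases "s \<le> 1/2")
  case True
  then have "s powr \<theta> \<le> (1 - s) powr \<theta>" using s \<theta> by (intro powr_mono2) auto
  then show ?thesis by simp
next
  case False
  then have le: "(1 - s) powr \<theta> \<le> s powr \<theta>" using s \<theta> by (intro powr_mono2) auto
  have "s powr \<theta> = ((1 - s) + (2 * s - 1)) powr \<theta>" by simp
  also have "\<dots> \<le> (1 - s) powr \<theta> + (2 * s - 1) powr \<theta>"
    using False s \<theta> by (intro powr_add_le_add_powr) auto
  finally show ?thesis using le False by simp
qed

lemma tpow_nonneg: "0 \<le> t \<Longrightarrow> 0 \<le> tpow t e"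
  by (simp add: tpow_def)

lemma tpow_le_one: "0 \<le> t \<Longrightarrow> t \<le> 1 \<Longrightarrow> 0 \<le> e \<Longrightarrow> tpow t e \<le> 1"
  by (simp add: tpow_def powr_le1)

lemma tpow_eq_powr: "0 < t \<Longrightarrow> tpow t e = t powr e"
  by (simp add: tpow_def)

lemma tpow_zero_right [simp]: "tpow t 0 = 1"
  by (simp add: tpow_def)

lemma tpow_mult: "0 \<le> s \<Longrightarrow> 0 \<le> t \<Longrightarrow> tpow (s * t) e = tpow s e * tpow t e"
  by (simp add: tpow_def powr_mult)

lemma continuous_on_tpow:
  assumes "continuous_on S h" "\<And>x. x \<in> S \<Longrightarrow> 0 \<le> h x" "0 \<le> e"
  shows "continuous_on S (\<lambda>x. tpow (h x) e)"
proof (cases "e = 0")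
  case False
  have "continuous_on S (\<lambda>x. h x powr e)"
    by (rule continuous_on_powr') (use assms False in auto)
  then show ?thesis using False by (simp add: tpow_def)
qed (simp add: tpow_def)

lemma linepath_real: "linepath b a s = b - (b - a) * (s::real)"
  by (simp add: linepath_def algebra_simps)

lemma linepath_pos:
  fixes a b s :: real
  assumes "0 < a" "0 < b" "0 \<le> s" "s \<le> 1"
  shows "0 < linepath b a s"
proof -
  have "0 < (1 - s) * b + s * a"
    using assms by (cases "s = 0") (auto intro: add_nonneg_pos add_pos_nonneg)
  then show ?thesis by (simp add: linepath_def)
qed

lemma continuous_on_div_linepath_sq:
  assumes "continuous_on {0..1} h" "0 \<le> e" "0 < a" "0 < b"
  shows "continuous_on {0..1} (\<lambda>s. h s * tpow (1 - s) e / (linepath b a s)^2)"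
proof -
  have "continuous_on {0..1} (\<lambda>s::real. tpow (1 - s) e)"
    by (rule continuous_on_tpow) (use assms in \<open>auto intro: continuous_intros\<close>)
  moreover have "linepath b a s \<noteq> 0" if "s \<in> {0..1}" for s
    using linepath_pos[of a b s] assms that by simp
  ultimately show ?thesis
    using assms by (intro continuous_intros continuous_on_linepath) auto
qed

section \<open>Hypergeometric integrals\<close>

lemma hyp2F1_2_eq_integral_linepath:
  fixes a b \<beta> \<gamma> :: real
  assumes "0 < a" "0 < b"
  shows "hyp2F1 2 \<beta> \<gamma> (1 - a / b) = b^2 / Beta \<beta> (\<gamma> - \<beta>) *
     integral {0..1} (\<lambda>s. s powr (\<beta> - 1) * (1 - s) powr (\<gamma> - \<beta> - 1) / (linepath b a s)^2)"
proof -
  have "integral {0..1} (\<lambda>s. s powr (\<beta> - 1) * (1 - s) powr (\<gamma> - \<beta> - 1) * (1 - (1 - a / b) * s) powr -2)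
      = integral {0..1} (\<lambda>s. b^2 * (s powr (\<beta> - 1) * (1 - s) powr (\<gamma> - \<beta> - 1) / (linepath b a s)^2))"
  proof (rule integral_cong)
    fix s :: real assume "s \<in> {0..1}"
    then have "0 < linepath b a s" using linepath_pos assms by simp
    moreover have "1 - (1 - a / b) * s = linepath b a s / b"
      using assms by (simp add: linepath_real field_simps)
    ultimately show "s powr (\<beta> - 1) * (1 - s) powr (\<gamma> - \<beta> - 1) * (1 - (1 - a / b) * s) powr -2
        = b^2 * (s powr (\<beta> - 1) * (1 - s) powr (\<gamma> - \<beta> - 1) / (linepath b a s)^2)"
      using assms by (simp add: powr_minus powr_divide field_simps)
  qed
  also have "\<dots> = b^2 * integral {0..1} (\<lambda>s. s powr (\<beta> - 1) * (1 - s) powr (\<gamma> - \<beta> - 1) / (linepath b a s)^2)"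
    by (rule integral_mult_right)
  finally show ?thesis by (simp add: hyp2F1_def)
qed

lemma has_integral_C5_first:
  fixes a b \<theta> e :: real
  assumes "0 < a" "0 < b" "0 < \<theta>" "0 \<le> e"
  shows "((\<lambda>s. (1 - s) powr \<theta> * tpow (1 - s) e / (linepath b a s)^2) has_integral
           b powr (-2) / (\<theta> + e + 1) * hyp2F1 2 1 (\<theta> + e + 2) (1 - a / b)) {0..1}"
proof -
  let ?g = "\<lambda>s. (1 - s) powr \<theta> * tpow (1 - s) e / (linepath b a s)^2"
  have "continuous_on {0..1} ?g"
    using assms by (intro continuous_on_div_linepath_sq continuous_on_powr') (auto intro: continuous_intros)
  then have g: "(?g has_integral integral {0..1} ?g) {0..1}"
    by (intro integrable_integral integrable_continuous_interval)
  have "integral {0..1} (\<lambda>s. s powr (1 - 1) * (1 - s) powr (\<theta> + e + 2 - 1 - 1) / (linepath b a s)^2)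
      = integral {0..1} ?g"
  proof (rule integral_spike[of "{0, 1}"])
    fix s :: real assume "s \<in> {0..1} - {0, 1}"
    then show "?g s = s powr (1 - 1) * (1 - s) powr (\<theta> + e + 2 - 1 - 1) / (linepath b a s)^2"
      by (simp add: tpow_eq_powr powr_add)
  qed simp
  moreover have "Beta 1 (\<theta> + e + 2 - 1) = 1 / (\<theta> + e + 1)"
    using Beta_1_left_real[of "\<theta> + e + 1"] assms by (simp add: add_ac)
  ultimately have hyp: "hyp2F1 2 1 (\<theta> + e + 2) (1 - a / b) = b^2 * (\<theta> + e + 1) * integral {0..1} ?g"
    using hyp2F1_2_eq_integral_linepath[OF assms(1,2), of 1 "\<theta> + e + 2"] by simp
  have "b powr (-2) / (\<theta> + e + 1) * hyp2F1 2 1 (\<theta> + e + 2) (1 - a / b) = integral {0..1} ?g"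
  proof -
    have "b powr (-2) = 1 / b^2" using assms by (simp add: powr_minus divide_inverse)
    then show ?thesis unfolding hyp using assms by simp
  qed
  then show ?thesis using g by simp
qed

lemma has_integral_C5_second:
  fixes a b \<theta> e :: real
  assumes "0 < a" "0 < b" "0 < \<theta>" "0 \<le> e"
  shows "((\<lambda>s. s powr \<theta> * tpow (1 - s) e / (linepath b a s)^2) has_integral
           Beta (\<theta> + 1) (e + 1) / b^2 * hyp2F1 2 (\<theta> + 1) (\<theta> + e + 2) (1 - a / b)) {0..1}"
proof -
  let ?g = "\<lambda>s. s powr \<theta> * tpow (1 - s) e / (linepath b a s)^2"
  have "continuous_on {0..1} ?g"
    using assms by (intro continuous_on_div_linepath_sq continuous_on_powr') (auto intro: continuous_intros)
  then have g: "(?g has_integral integral {0..1} ?g) {0..1}"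
    by (intro integrable_integral integrable_continuous_interval)
  have "integral {0..1} (\<lambda>s. s powr (\<theta> + 1 - 1) * (1 - s) powr (\<theta> + e + 2 - (\<theta> + 1) - 1) / (linepath b a s)^2)
      = integral {0..1} ?g"
  proof (rule integral_spike[of "{1}"])
    fix s :: real assume "s \<in> {0..1} - {1}"
    then show "?g s = s powr (\<theta> + 1 - 1) * (1 - s) powr (\<theta> + e + 2 - (\<theta> + 1) - 1) / (linepath b a s)^2"
      by (simp add: tpow_eq_powr)
  qed simp
  moreover have "0 < Beta (\<theta> + 1) (e + 1)"
    using assms by (intro Beta_pos_real) auto
  ultimately show ?thesis
    using g assms hyp2F1_2_eq_integral_linepath[OF assms(1,2), of "\<theta> + 1" "\<theta> + e + 2"]
    by (simp add: field_simps)
qed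

lemma one_minus_mult_pos:
  fixes z t :: real
  assumes "0 \<le> z" "z < 1" "t \<in> {0..1}"
  shows "0 < 1 - z * t"
proof -
  have "z * t \<le> z" using assms by (intro mult_left_le) auto
  then show ?thesis using assms by linarith
qed

lemma hyp2F1_2_eq_integral_tpow:
  fixes \<theta> e z :: real
  assumes "0 \<le> z" "z < 1"
  shows "hyp2F1 2 (\<theta> + 1) (\<theta> + e + 2) z
    = integral {0..1} (\<lambda>t. t powr \<theta> * tpow (1 - t) e / (1 - z * t)^2) / Beta (\<theta> + 1) (e + 1)"
proof -
  have "integral {0..1} (\<lambda>t. t powr (\<theta> + 1 - 1) * (1 - t) powr (\<theta> + e + 2 - (\<theta> + 1) - 1) * (1 - z * t) powr - 2)
      = integral {0..1} (\<lambda>t. t powr \<theta> * tpow (1 - t) e / (1 - z * t)^2)"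
  proof (rule integral_spike[of "{1}"])
    fix t :: real assume t: "t \<in> {0..1} - {1}"
    then have "0 < 1 - z * t" using assms by (intro one_minus_mult_pos) auto
    with t show "t powr \<theta> * tpow (1 - t) e / (1 - z * t)^2
        = t powr (\<theta> + 1 - 1) * (1 - t) powr (\<theta> + e + 2 - (\<theta> + 1) - 1) * (1 - z * t) powr - 2"
      by (simp add: powr_minus divide_inverse tpow_eq_powr)
  qed simp
  then show ?thesis by (simp add: hyp2F1_def)
qed

text \<open>The substitution \<open>t = 2s - 1\<close> turns the hypergeometric integral with argument
  \<open>(b - a)/(b + a)\<close> into an integral over \<open>[1/2, 1]\<close> with the same denominator as the other two terms.\<close>
lemma has_integral_C5_third:
  fixes a b \<theta> e :: real
  assumes ab: "0 < a" "a < b" and \<theta>: "0 < \<theta>" and e: "0 \<le> e"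
  shows "((\<lambda>s. 2 * (max 0 (2 * s - 1)) powr \<theta> * tpow (1 - s) e / (linepath b a s)^2) has_integral
           Beta (\<theta> + 1) (e + 1) / ((a + b)^2 * 2 powr (e - 2)) * hyp2F1 2 (\<theta> + 1) (\<theta> + e + 2) ((b - a) / (b + a)))
         {0..1}"
proof -
  define z where "z = (b - a) / (b + a)"
  define u where "u = (\<lambda>t. t powr \<theta> * tpow (1 - t) e / (1 - z * t)^2)"
  define F where "F = (\<lambda>s. 2 * (max 0 (2 * s - 1)) powr \<theta> * tpow (1 - s) e / (linepath b a s)^2)"
  have z: "0 < 1 - z * t" if "t \<in> {0..1}" for t
    unfolding z_def using ab that by (intro one_minus_mult_pos) auto
  have "continuous_on {0..1} (\<lambda>t::real. tpow (1 - t) e)"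
    by (rule continuous_on_tpow) (use e in \<open>auto intro: continuous_intros\<close>)
  then have cu: "continuous_on {0..1} u"
    unfolding u_def using \<theta> z
    by (intro continuous_intros continuous_on_powr') (auto simp: less_le)
  have hyp: "hyp2F1 2 (\<theta> + 1) (\<theta> + e + 2) z = integral {0..1} u / Beta (\<theta> + 1) (e + 1)"
    unfolding u_def z_def using ab by (intro hyp2F1_2_eq_integral_tpow) auto
  have "((\<lambda>s. 2 *\<^sub>R u (2 * s - 1)) has_integral integral {2 * (1/2) - 1 .. 2 * 1 - 1} u) {1/2..1}"
    by (rule has_integral_substitution[where c = 0 and d = 1]) (auto intro!: derivative_eq_intros cu)
  then have "((\<lambda>s. 4 / ((a + b)^2 * 2 powr e) * (2 *\<^sub>R u (2 * s - 1))) has_integral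
           4 / ((a + b)^2 * 2 powr e) * integral {0..1} u) {1/2..1}"
    by (intro has_integral_mult_right) simp
  then have right: "(F has_integral 4 / ((a + b)^2 * 2 powr e) * integral {0..1} u) {1/2..1}"
  proof (rule has_integral_eq[rotated])
    fix s :: real assume s: "s \<in> {1/2..1}"
    have l: "0 < linepath b a s" using linepath_pos[of a b s] ab s by simp
    have tp: "tpow (1 - (2 * s - 1)) e = 2 powr e * tpow (1 - s) e"
      using s tpow_mult[of 2 "1 - s" e] by (simp add: tpow_def)
    have lz: "1 - z * (2 * s - 1) = 2 * linepath b a s / (a + b)"
      unfolding z_def using ab by (simp add: linepath_real field_simps)
    have mx: "max 0 (2 * s - 1) = 2 * s - 1" using s by simp
    have "4 / (c^2 * E) * (2 * (P * (E * T) / (2 * l / c)^2)) = 2 * P * T / l^2"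
      if "0 < c" "0 < E" "0 < l" for c E P T l :: real
      using that by (simp add: field_simps power2_eq_square)
    then show "4 / ((a + b)^2 * 2 powr e) * (2 *\<^sub>R u (2 * s - 1)) = F s"
      unfolding u_def F_def tp lz mx using l ab by (simp add: mult.assoc)
  qed
  have left: "(F has_integral 0) {0..1/2}"
    by (rule has_integral_eq[OF _ has_integral_0]) (simp add: F_def)
  have "(F has_integral 0 + 4 / ((a + b)^2 * 2 powr e) * integral {0..1} u) {0..1}"
    by (rule has_integral_combine[OF _ _ left right]) auto
  moreover have "0 < Beta (\<theta> + 1) (e + 1)"
    using \<theta> e by (intro Beta_pos_real) auto
  ultimately show ?thesis
    unfolding F_def z_def[symmetric] hyp by (simp add: powr_diff)
qed

lemma has_integral_C5:
  fixes a b \<theta> e :: real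
  assumes "0 < a" "a < b" "0 < \<theta>" "0 \<le> e"
  shows "((\<lambda>s. ((1 - s) powr \<theta> - s powr \<theta> + 2 * (max 0 (2 * s - 1)) powr \<theta>) * tpow (1 - s) e
           / (linepath b a s)^2) has_integral C5 \<theta> e a b) {0..1}"
proof -
  have "((\<lambda>s. (1 - s) powr \<theta> * tpow (1 - s) e / (linepath b a s)^2
           - s powr \<theta> * tpow (1 - s) e / (linepath b a s)^2
           + 2 * (max 0 (2 * s - 1)) powr \<theta> * tpow (1 - s) e / (linepath b a s)^2)
         has_integral C5 \<theta> e a b) {0..1}"
    unfolding C5_def using assms
    by (intro has_integral_add has_integral_diff has_integral_C5_first has_integral_C5_second
        has_integral_C5_third) auto
  then show ?thesis
    by (rule has_integral_eq[rotated]) (simp add: algebra_simps add_divide_distrib diff_divide_distrib)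
qed

lemma C4_eq_C5_zero:
  assumes "0 < \<theta>" "0 < a" "a < b"
  shows "C4 \<theta> a b = C5 \<theta> 0 a b"
proof -
  have B: "Beta (\<theta> + 1) (0 + 1) = 1 / (\<theta> + 1)"
    using Beta_1_left_real[of "\<theta> + 1"] Beta_commute[of "\<theta> + 1" 1] assms by simp
  have "(2::real) powr (- 2) = 1 / 4" by (simp add: powr_minus)
  then show ?thesis
    unfolding C4_def C5_def B add_0_right using assms by (simp add: powr_minus field_simps power2_eq_square)
qed

section \<open>The fractional kernel\<close>

definition frac_kernel :: "real \<Rightarrow> real \<Rightarrow> real \<Rightarrow> real \<Rightarrow> real \<Rightarrow> real" where
  "frac_kernel a b \<theta> e s = \<bar>(1 - s) powr \<theta> - s powr \<theta>\<bar> * tpow (1 - s) e / (linepath b a s)^2"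

lemma frac_kernel_nonneg: "0 < a \<Longrightarrow> 0 < b \<Longrightarrow> s \<in> {0..1} \<Longrightarrow> 0 \<le> frac_kernel a b \<theta> e s"
  unfolding frac_kernel_def by (auto intro!: divide_nonneg_nonneg mult_nonneg_nonneg tpow_nonneg)

lemma tpow_antimono:
  assumes "0 \<le> e" "e \<le> e'" "0 \<le> t" "t \<le> 1"
  shows "tpow t e' \<le> tpow t e"
proof (cases "e = 0")
  case True
  then show ?thesis using assms tpow_le_one[of t e'] by simp
next
  case False
  then show ?thesis using assms by (simp add: tpow_def powr_mono')
qed

lemma frac_kernel_antimono:
  assumes "0 \<le> e" "e \<le> e'" "s \<in> {0..1}"
  shows "frac_kernel a b \<theta> e' s \<le> frac_kernel a b \<theta> e s"
  unfolding frac_kernel_def using assms tpow_antimono[of e e' "1 - s"]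
  by (auto intro!: divide_right_mono mult_left_mono)

lemma continuous_on_frac_kernel:
  assumes "0 < a" "0 < b" "0 < \<theta>" "0 \<le> e"
  shows "continuous_on {0..1} (frac_kernel a b \<theta> e)"
  unfolding frac_kernel_def using assms
  by (intro continuous_on_div_linepath_sq continuous_intros continuous_on_powr') auto

lemma has_integral_frac_kernel:
  assumes "0 < a" "0 < b" "0 < \<theta>" "0 \<le> e"
  shows "(frac_kernel a b \<theta> e has_integral integral {0..1} (frac_kernel a b \<theta> e)) {0..1}"
  using continuous_on_frac_kernel[OF assms]
  by (intro integrable_integral integrable_continuous_interval)

text \<open>The integrand of \<open>C5\<close> exceeds the kernel by a nonnegative amount that is antitone in
  \<open>e\<close>; this yields both comparisons below.\<close>
lemma has_integral_C5_minus_frac_kernel: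
  assumes "0 < a" "a < b" "0 < \<theta>" "0 \<le> e"
  shows "((\<lambda>s. ((1 - s) powr \<theta> - s powr \<theta> + 2 * (max 0 (2 * s - 1)) powr \<theta> - \<bar>(1 - s) powr \<theta> - s powr \<theta>\<bar>)
           * tpow (1 - s) e / (linepath b a s)^2)
         has_integral C5 \<theta> e a b - integral {0..1} (frac_kernel a b \<theta> e)) {0..1}"
proof -
  have "0 < b" using assms by simp
  from has_integral_diff[OF has_integral_C5[OF assms] has_integral_frac_kernel[OF assms(1) this assms(3,4)]]
  show ?thesis
    by (rule has_integral_eq[rotated])
       (simp only: frac_kernel_def diff_divide_distrib[symmetric] left_diff_distrib[symmetric])
qed

lemma integral_frac_kernel_le_C5:
  assumes "0 < a" "a < b" "0 < \<theta>" "\<theta> \<le> 1" "0 \<le> e"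
  shows "integral {0..1} (frac_kernel a b \<theta> e) \<le> C5 \<theta> e a b"
proof -
  have "0 \<le> (1 - s) powr \<theta> - s powr \<theta> + 2 * (max 0 (2 * s - 1)) powr \<theta> - \<bar>(1 - s) powr \<theta> - s powr \<theta>\<bar>"
    if "s \<in> {0..1}" for s
    using abs_powr_diff_le[of s \<theta>] assms that by simp
  then have "0 \<le> C5 \<theta> e a b - integral {0..1} (frac_kernel a b \<theta> e)"
    using assms
    by (intro has_integral_nonneg[OF has_integral_C5_minus_frac_kernel])
       (auto intro!: divide_nonneg_nonneg mult_nonneg_nonneg tpow_nonneg)
  then show ?thesis by simp
qed

lemma integral_frac_kernel_diff_le_C6:
  assumes "0 < a" "a < b" "0 < \<theta>" "\<theta> \<le> 1" "0 \<le> e" "e \<le> 1"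
  shows "integral {0..1} (frac_kernel a b \<theta> 0) - integral {0..1} (frac_kernel a b \<theta> e) \<le> C6 \<theta> e a b"
proof -
  have "C5 \<theta> e a b - integral {0..1} (frac_kernel a b \<theta> e) \<le> C5 \<theta> 0 a b - integral {0..1} (frac_kernel a b \<theta> 0)"
  proof (rule has_integral_le[OF has_integral_C5_minus_frac_kernel has_integral_C5_minus_frac_kernel])
    fix s :: real assume s: "s \<in> {0..1}"
    then show "((1 - s) powr \<theta> - s powr \<theta> + 2 * (max 0 (2 * s - 1)) powr \<theta> - \<bar>(1 - s) powr \<theta> - s powr \<theta>\<bar>)
        * tpow (1 - s) e / (linepath b a s)^2
      \<le> ((1 - s) powr \<theta> - s powr \<theta> + 2 * (max 0 (2 * s - 1)) powr \<theta> - \<bar>(1 - s) powr \<theta> - s powr \<theta>\<bar>)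
        * tpow (1 - s) 0 / (linepath b a s)^2"
      using assms abs_powr_diff_le[of s \<theta>] tpow_le_one[of "1 - s" e]
      by (intro divide_right_mono mult_left_mono) auto
  qed (use assms in auto)
  then show ?thesis
    unfolding C6_def C4_eq_C5_zero[OF assms(3,1,2)] by simp
qed

lemma C5_nonneg:
  assumes "0 < a" "a < b" "0 < \<theta>" "\<theta> \<le> 1" "0 \<le> e"
  shows "0 \<le> C5 \<theta> e a b"
proof -
  have "0 \<le> integral {0..1} (frac_kernel a b \<theta> e)"
    using assms frac_kernel_nonneg[of a b]
    by (intro has_integral_nonneg[OF has_integral_frac_kernel]) auto
  with integral_frac_kernel_le_C5[OF assms] show ?thesis by linarith
qed

lemma C6_nonneg:
  assumes "0 < a" "a < b" "0 < \<theta>" "\<theta> \<le> 1" "0 \<le> e" "e \<le> 1"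
  shows "0 \<le> C6 \<theta> e a b"
proof -
  have "integral {0..1} (frac_kernel a b \<theta> e) \<le> integral {0..1} (frac_kernel a b \<theta> 0)"
    using assms frac_kernel_antimono[of 0 e]
    by (intro has_integral_le[OF has_integral_frac_kernel has_integral_frac_kernel]) auto
  with integral_frac_kernel_diff_le_C6[OF assms] show ?thesis by linarith
qed

section \<open>Integral representation of \<open>I_f\<close>\<close>

lemma integrable_powr_from_left_endpoint:
  fixes p r \<theta> :: real
  assumes "p \<le> r" "0 < \<theta>"
  shows "(\<lambda>x. (x - p) powr (\<theta> - 1)) integrable_on {p..r}"
  using integrable_shift_real_ivl[OF integrable_on_powr_from_0[of "\<theta> - 1" "r - p"], of "-p"] assms
  by simp

lemma integrable_powr_to_right_endpoint:
  fixes p r \<theta> :: real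
  assumes "p \<le> r" "0 < \<theta>"
  shows "(\<lambda>x. (r - x) powr (\<theta> - 1)) integrable_on {p..r}"
proof -
  have "(\<lambda>x. (x + r) powr (\<theta> - 1)) integrable_on {-r..-p}"
    using integrable_shift_real_ivl[OF integrable_on_powr_from_0[of "\<theta> - 1" "r - p"], of r] assms
    by simp
  then show ?thesis
    using Henstock_Kurzweil_Integration.integrable_reflect_real[where f = "\<lambda>x. (x + r) powr (\<theta> - 1)" and a = "-r" and b = "-p"]
    by simp
qed

lemma integrable_continuous_mult_nonneg:
  fixes \<phi> g :: "real \<Rightarrow> real"
  assumes "continuous_on {p..r} \<phi>" "g integrable_on {p..r}" "\<And>x. x \<in> {p..r} \<Longrightarrow> 0 \<le> g x"
  shows "(\<lambda>x. g x * \<phi> x) integrable_on {p..r}"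
proof -
  have "(\<lambda>x. \<phi> x * g x) absolutely_integrable_on {p..r}"
  proof (rule absolutely_integrable_bounded_measurable_product_real)
    show "\<phi> \<in> borel_measurable (lebesgue_on {p..r})"
      by (rule continuous_imp_measurable_on_sets_lebesgue[OF assms(1)]) simp
    show "bounded (\<phi> ` {p..r})"
      by (intro compact_imp_bounded compact_continuous_image assms(1)) simp
    show "g absolutely_integrable_on {p..r}"
      by (rule nonnegative_absolutely_integrable_1[OF assms(2,3)])
  qed simp
  then show ?thesis
    by (simp add: absolutely_integrable_on_def mult.commute)
qed

lemma has_integral_Riemann_Liouville_by_parts:
  fixes \<phi> \<phi>' :: "real \<Rightarrow> real"
  assumes pr: "p < r" and \<theta>: "0 < \<theta>" and c\<phi>: "continuous_on {p..r} \<phi>"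
    and d\<phi>: "\<And>x. x \<in> {p<..<r} \<Longrightarrow> (\<phi> has_real_derivative \<phi>' x) (at x)"
  shows "((\<lambda>x. \<phi>' x * ((x - p) powr \<theta> - (r - x) powr \<theta>)) has_integral
    (\<phi> r + \<phi> p) * (r - p) powr \<theta>
     - \<theta> * integral {p..r} (\<lambda>x. (x - p) powr (\<theta> - 1) * \<phi> x)
     - \<theta> * integral {p..r} (\<lambda>x. (r - x) powr (\<theta> - 1) * \<phi> x)) {p..r}"
proof -
  define K1 where "K1 = integral {p..r} (\<lambda>x. (x - p) powr (\<theta> - 1) * \<phi> x)"
  define K2 where "K2 = integral {p..r} (\<lambda>x. (r - x) powr (\<theta> - 1) * \<phi> x)"
  have "((\<lambda>x. (x - p) powr (\<theta> - 1) * \<phi> x) has_integral K1) {p..r}"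
    unfolding K1_def using pr \<theta>
    by (intro integrable_integral integrable_continuous_mult_nonneg[OF c\<phi>] integrable_powr_from_left_endpoint) auto
  then have h1: "((\<lambda>x. \<phi> x * (\<theta> * (x - p) powr (\<theta> - 1))) has_integral \<theta> * K1) {p..r}"
    by (rule has_integral_eq[rotated, OF has_integral_mult_right]) (simp add: mult_ac)
  have "((\<lambda>x. (r - x) powr (\<theta> - 1) * \<phi> x) has_integral K2) {p..r}"
    unfolding K2_def using pr \<theta>
    by (intro integrable_integral integrable_continuous_mult_nonneg[OF c\<phi>] integrable_powr_to_right_endpoint) auto
  then have h2: "((\<lambda>x. \<phi> x * (\<theta> * (r - x) powr (\<theta> - 1) * (-1))) has_integral (-\<theta>) * K2) {p..r}"
    by (rule has_integral_eq[rotated, OF has_integral_mult_right]) (simp add: mult_ac)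
  have cg1: "continuous_on {p..r} (\<lambda>x. (x - p) powr \<theta>)"
    by (rule continuous_on_powr') (use \<theta> in \<open>auto intro: continuous_intros\<close>)
  have cg2: "continuous_on {p..r} (\<lambda>x. (r - x) powr \<theta>)"
    by (rule continuous_on_powr') (use \<theta> in \<open>auto intro: continuous_intros\<close>)
  have dg1: "((\<lambda>x. (x - p) powr \<theta>) has_real_derivative \<theta> * (x - p) powr (\<theta> - 1)) (at x)"
    and dg2: "((\<lambda>x. (r - x) powr \<theta>) has_real_derivative \<theta> * (r - x) powr (\<theta> - 1) * (-1)) (at x)"
    if "x \<in> {p<..<r}" for x
    using that by (auto intro!: derivative_eq_intros)
  have P1: "((\<lambda>x. \<phi>' x * (x - p) powr \<theta>) has_integral \<phi> r * (r - p) powr \<theta> - \<theta> * K1) {p..r}"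
    using integration_by_parts_interior_strong[OF bounded_bilinear_mult, of "{}" p r \<phi>
        "\<lambda>x. (x - p) powr \<theta>" \<phi>' "\<lambda>x. \<theta> * (x - p) powr (\<theta> - 1)" "\<phi> r * (r - p) powr \<theta> - \<theta> * K1"]
      pr c\<phi> cg1 d\<phi> dg1 h1 \<theta>
    by (simp add: has_real_derivative_iff_has_vector_derivative)
  have P2: "((\<lambda>x. \<phi>' x * (r - x) powr \<theta>) has_integral - \<phi> p * (r - p) powr \<theta> + \<theta> * K2) {p..r}"
    using integration_by_parts_interior_strong[OF bounded_bilinear_mult, of "{}" p r \<phi>
        "\<lambda>x. (r - x) powr \<theta>" \<phi>' "\<lambda>x. \<theta> * (r - x) powr (\<theta> - 1) * (-1)" "- \<phi> p * (r - p) powr \<theta> + \<theta> * K2"]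
      pr c\<phi> cg2 d\<phi> dg2 h2 \<theta>
    by (simp add: has_real_derivative_iff_has_vector_derivative)
  from has_integral_diff[OF P1 P2] show ?thesis
    unfolding K1_def[symmetric] K2_def[symmetric] by (simp add: algebra_simps)
qed

lemma I_f_eq_Riemann_Liouville_by_parts:
  fixes f :: "real \<Rightarrow> real"
  assumes "0 < \<theta>" "0 < a" "a < b"
  shows "2 * (1/a - 1/b) powr \<theta> * I_f f \<theta> a b =
    (f a + f b) * (1/a - 1/b) powr \<theta>
     - \<theta> * integral {1/b..1/a} (\<lambda>x. (x - 1/b) powr (\<theta> - 1) * f (1/x))
     - \<theta> * integral {1/b..1/a} (\<lambda>x. (1/a - x) powr (\<theta> - 1) * f (1/x))"
proof -
  have L: "0 < 1/a - 1/b" using assms by (simp add: frac_less2)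
  have abL: "a * b / (b - a) = 1 / (1/a - 1/b)" using assms by (simp add: field_simps)
  have inv: "(1 / (1/a - 1/b)) powr \<theta> = 1 / (1/a - 1/b) powr \<theta>"
    using L by (simp add: powr_divide)
  have G: "Gamma (\<theta> + 1) = \<theta> * Gamma \<theta>"
    using assms by (intro Gamma_plus1) (auto elim!: nonpos_Ints_cases)
  have "0 < Gamma \<theta>" "0 < (1/a - 1/b) powr \<theta>" using assms L by auto
  then show ?thesis
    unfolding I_f_def RL_right_def RL_left_def abL inv G by (simp add: field_simps)
qed

lemma has_integral_I_f:
  fixes f f' :: "real \<Rightarrow> real"
  assumes \<theta>: "0 < \<theta>" and ab: "0 < a" "a < b"
    and f': "\<And>y. y \<in> {a..b} \<Longrightarrow> (f has_real_derivative f' y) (at y)"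
  shows "((\<lambda>x. f' (1/x) / x^2 * ((1/a - x) powr \<theta> - (x - 1/b) powr \<theta>)) has_integral
           2 * (1/a - 1/b) powr \<theta> * I_f f \<theta> a b) {1/b..1/a}"
proof -
  have pos: "0 < x" if "x \<in> {1/b..1/a}" for x
    using that ab by (auto intro: less_le_trans[of 0 "1/b"])
  have inv: "1/x \<in> {a..b}" if "x \<in> {1/b..1/a}" for x
    using that ab pos[OF that] by (auto simp: field_simps)
  have d: "((\<lambda>x. f (1/x)) has_real_derivative f' (1/x) * (- 1 / x^2)) (at x)"
    if "x \<in> {1/b..1/a}" for x
  proof -
    have "((\<lambda>x. 1 / x) has_real_derivative - 1 / x^2) (at x)"
      using pos[OF that] by (auto intro!: derivative_eq_intros simp: power2_eq_square)
    from DERIV_chain2[OF f'[OF inv[OF that]] this] show ?thesis .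
  qed
  have c: "continuous_on {1/b..1/a} (\<lambda>x. f (1/x))"
    by (rule continuous_at_imp_continuous_on) (use d DERIV_isCont in blast)
  have pr: "1/b < 1/a" using ab by (simp add: frac_less2)
  have fab: "f (1/(1/a)) = f a" "f (1/(1/b)) = f b" by simp_all
  have "((\<lambda>x. f' (1/x) * (- 1 / x^2) * ((x - 1/b) powr \<theta> - (1/a - x) powr \<theta>)) has_integral
      2 * (1/a - 1/b) powr \<theta> * I_f f \<theta> a b) {1/b..1/a}"
    unfolding I_f_eq_Riemann_Liouville_by_parts[OF \<theta> ab]
    by (rule has_integral_Riemann_Liouville_by_parts[OF pr \<theta> c, unfolded fab]) (use d in auto)
  then show ?thesis
    by (rule has_integral_eq[rotated]) (simp add: algebra_simps)
qed

lemma has_integral_reflect_unit_interval: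
  fixes F :: "real \<Rightarrow> real"
  assumes "p < r" "continuous_on {0..1} F"
  shows "((\<lambda>x. F ((r - x) / (r - p))) has_integral (r - p) * integral {0..1} F) {p..r}"
proof -
  have "((\<lambda>x. (-1 / (r - p)) *\<^sub>R F ((r - x) / (r - p))) has_integral
     integral {(r - p) / (r - p) .. (r - r) / (r - p)} F - integral {(r - r) / (r - p) .. (r - p) / (r - p)} F) {p..r}"
  proof (rule has_integral_substitution_general[of "{}" p r "\<lambda>x. (r - x) / (r - p)" 0 1])
    show "(\<lambda>x. (r - x) / (r - p)) ` {p..r} \<subseteq> {0..1}" using assms by (auto simp: field_simps)
    fix x
    show "((\<lambda>x. (r - x) / (r - p)) has_real_derivative -1 / (r - p)) (at x within {p..r})"
      using assms by (auto intro!: derivative_eq_intros simp: divide_simps)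
  qed (use assms in \<open>auto intro!: continuous_intros\<close>)
  from has_integral_mult_right[OF this, of "- (r - p)"] assms
  have "((\<lambda>x. - (r - p) * ((-1 / (r - p)) *\<^sub>R F ((r - x) / (r - p)))) has_integral
      (r - p) * integral {0..1} F) {p..r}"
    by (simp add: algebra_simps)
  then show ?thesis
    by (rule has_integral_eq[rotated]) (use assms in \<open>simp add: field_simps\<close>)
qed

text \<open>Under \<open>x = 1/b + (1/a - 1/b)(1 - s)\<close> one has \<open>x = linepath b a s / (ab)\<close>.\<close>
lemma has_integral_frac_kernel_reciprocal:
  fixes a b \<theta> e :: real
  assumes ab: "0 < a" "a < b" and \<theta>: "0 < \<theta>" and e: "0 \<le> e"
  shows "((\<lambda>x. \<bar>(x - 1/b) powr \<theta> - (1/a - x) powr \<theta>\<bar> / x^2 * tpow ((x - 1/b) / (1/a - 1/b)) e)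
     has_integral (1/a - 1/b) powr \<theta> * (a * b * (b - a)) * integral {0..1} (frac_kernel a b \<theta> e)) {1/b..1/a}"
proof -
  define p where "p = 1/b"
  define r where "r = 1/a"
  define L where "L = r - p"
  have L: "0 < L" "0 < L powr \<theta>" "L * (a * b)^2 = a * b * (b - a)"
    unfolding L_def p_def r_def using ab by (auto simp: frac_less2 field_simps power2_eq_square)
  have "((\<lambda>x. L powr \<theta> * (a * b)^2 * frac_kernel a b \<theta> e ((r - x) / L)) has_integral
      L powr \<theta> * (a * b)^2 * (L * integral {0..1} (frac_kernel a b \<theta> e))) {p..r}"
    unfolding L_def using ab \<theta> e L
    by (intro has_integral_mult_right has_integral_reflect_unit_interval continuous_on_frac_kernel)
       (auto simp: L_def)
  then have "((\<lambda>x. \<bar>(x - p) powr \<theta> - (r - x) powr \<theta>\<bar> / x^2 * tpow ((x - p) / L) e) has_integral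
      L powr \<theta> * (a * b)^2 * (L * integral {0..1} (frac_kernel a b \<theta> e))) {p..r}"
  proof (rule has_integral_eq[rotated])
    fix x assume x: "x \<in> {p..r}"
    define s where "s = (r - x) / L"
    have s1: "1 - s = (x - p) / L" unfolding s_def using L by (simp add: field_simps L_def)
    have "0 < x" using x ab unfolding p_def by (auto intro: less_le_trans[of 0 "1/b"])
    have lp: "linepath b a s = a * b * x"
      unfolding s_def L_def p_def r_def using ab by (simp add: linepath_real field_simps)
    have pw: "(1 - s) powr \<theta> = (x - p) powr \<theta> / L powr \<theta>" "s powr \<theta> = (r - x) powr \<theta> / L powr \<theta>"
      unfolding s1 unfolding s_def using x L by (simp_all add: powr_divide)
    show "L powr \<theta> * (a * b)\<^sup>2 * frac_kernel a b \<theta> e ((r - x) / L) =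
        \<bar>(x - p) powr \<theta> - (r - x) powr \<theta>\<bar> / x\<^sup>2 * tpow ((x - p) / L) e"
      unfolding s_def[symmetric] frac_kernel_def pw lp unfolding s1 using L ab \<open>0 < x\<close>
      by (simp add: abs_divide diff_divide_distrib[symmetric] field_simps power2_eq_square)
  qed
  then show ?thesis
    unfolding p_def r_def L_def[symmetric] mult.assoc[symmetric] L(3)[symmetric]
    by (simp add: L_def p_def r_def mult_ac)
qed

text \<open>For \<open>x = 1/b + t (1/a - 1/b)\<close> the harmonic combination of \<open>a\<close> and \<open>b/m\<close> with weight \<open>t\<close>
  is exactly \<open>1/x\<close>.\<close>
lemma harm_alpha_m_convex_on_reciprocal:
  fixes h :: "real \<Rightarrow> real"
  assumes conv: "harm_alpha_m_convex_on {a..b/m} \<alpha> m h"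
    and ab: "0 < a" "a < b" and m: "0 < m" "m \<le> 1" and x: "x \<in> {1/b..1/a}"
  shows "h (1/x) \<le> tpow ((x - 1/b) / (1/a - 1/b)) \<alpha> * h a
                    + m * (1 - tpow ((x - 1/b) / (1/a - 1/b)) \<alpha>) * h (b/m)"
proof -
  define t where "t = (x - 1/b) / (1/a - 1/b)"
  have L: "0 < 1/a - 1/b" using ab by (simp add: frac_less2)
  have "0 < x" using x ab by (auto intro: less_le_trans[of 0 "1/b"])
  have t: "t \<in> {0..1}" unfolding t_def using x L by (auto simp: field_simps)
  have bm: "b \<le> b/m" using ab m by (simp add: le_divide_eq mult_left_le)
  have "t * (b - a) = a * b * x - a"
    unfolding t_def using ab by (simp add: field_simps)
  then have "m * t * (b/m) + (1 - t) * a = a * b * x"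
    using m by (simp add: algebra_simps)
  then have arg: "m * a * (b/m) / (m * t * (b/m) + (1 - t) * a) = 1/x"
    using ab m \<open>0 < x\<close> by (simp add: field_simps)
  have "1/x \<in> {a..b}"
    using x ab \<open>0 < x\<close> by (auto simp: field_simps)
  then have "1/x \<in> {a..b/m}" using bm by auto
  moreover have "a \<in> {a..b/m}" "b/m \<in> {a..b/m}" using ab bm by auto
  ultimately show ?thesis
    using conv[unfolded harm_alpha_m_convex_on_def, rule_format, of a "b/m" t, unfolded arg] t
    unfolding t_def by blast
qed

lemma I_f_abs_le_of_majorant:
  fixes f f' g :: "real \<Rightarrow> real"
  assumes \<theta>: "0 < \<theta>" and ab: "0 < a" "a < b"
    and f': "\<And>y. y \<in> {a..b} \<Longrightarrow> (f has_real_derivative f' y) (at y)"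
    and g: "\<And>x. x \<in> {1/b..1/a} \<Longrightarrow> \<bar>f' (1/x)\<bar> \<le> g x"
    and G: "((\<lambda>x. \<bar>(x - 1/b) powr \<theta> - (1/a - x) powr \<theta>\<bar> / x^2 * g x) has_integral G) {1/b..1/a}"
  shows "\<bar>I_f f \<theta> a b\<bar> \<le> G / (2 * (1/a - 1/b) powr \<theta>)"
proof -
  have L: "0 < (1/a - 1/b) powr \<theta>" using ab by (simp add: frac_less2)
  let ?F = "\<lambda>x. f' (1/x) / x^2 * ((1/a - x) powr \<theta> - (x - 1/b) powr \<theta>)"
  let ?g = "\<lambda>x. \<bar>(x - 1/b) powr \<theta> - (1/a - x) powr \<theta>\<bar> / x^2 * g x"
  note F = has_integral_I_f[OF \<theta> ab f']
  have "norm (?F x) \<le> ?g x" if x: "x \<in> {1/b..1/a}" for x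
  proof -
    have "norm (?F x) = \<bar>f' (1/x)\<bar> * (\<bar>(x - 1/b) powr \<theta> - (1/a - x) powr \<theta>\<bar> / x^2)"
      by (simp add: abs_mult abs_divide abs_minus_commute)
    also have "\<dots> \<le> g x * (\<bar>(x - 1/b) powr \<theta> - (1/a - x) powr \<theta>\<bar> / x^2)"
      using g[OF x] by (intro mult_right_mono) auto
    finally show ?thesis by (simp add: mult.commute)
  qed
  then have "norm (integral {1/b..1/a} ?F) \<le> integral {1/b..1/a} ?g"
    using F G by (intro integral_norm_bound_integral) auto
  then have "norm (2 * (1/a - 1/b) powr \<theta> * I_f f \<theta> a b) \<le> G"
    using integral_unique[OF F] integral_unique[OF G] by simp
  then show ?thesis using L by (simp add: abs_mult field_simps)
qed

lemma I_f_abs_le_Young_frac_kernel: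
  fixes f f' :: "real \<Rightarrow> real"
  assumes \<theta>: "0 < \<theta>" and ab: "0 < a" "a < b" and \<alpha>: "0 \<le> \<alpha>"
    and q: "1 \<le> q" and m: "0 < m" and K: "0 < K" and XY: "0 \<le> X" "0 \<le> Y"
    and f': "\<And>y. y \<in> {a..b} \<Longrightarrow> (f has_real_derivative f' y) (at y)"
    and conv: "\<And>x. x \<in> {1/b..1/a} \<Longrightarrow> \<bar>f' (1/x)\<bar> powr q
       \<le> tpow ((x - 1/b) / (1/a - 1/b)) \<alpha> * X + m * (1 - tpow ((x - 1/b) / (1/a - 1/b)) \<alpha>) * Y"
  defines "T e \<equiv> integral {0..1} (frac_kernel a b \<theta> e)"
  shows "\<bar>I_f f \<theta> a b\<bar> \<le> a * b * (b - a) / 2 *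
           (K powr (1/q) * ((X * T \<alpha> + m * Y * (T 0 - T \<alpha>)) / (q * K) + (1 - 1/q) * T 0))"
proof -
  define L where "L = 1/a - 1/b"
  define M where "M = a * b * (b - a)"
  define w where "w x = \<bar>(x - 1/b) powr \<theta> - (1/a - x) powr \<theta>\<bar> / x^2" for x
  define \<tau> where "\<tau> x = tpow ((x - 1/b) / L) \<alpha>" for x
  define c1 where "c1 = K powr (1/q) * (X - m * Y) / (q * K)"
  define c2 where "c2 = K powr (1/q) * (m * Y / (q * K) + 1 - 1/q)"
  define g where "g x = K powr (1/q) * ((\<tau> x * X + m * (1 - \<tau> x) * Y) / (q * K) + 1 - 1/q)" for x
  have L: "0 < L" "0 < L powr \<theta>" unfolding L_def using ab by (simp_all add: frac_less2)
  have W: "((\<lambda>x. w x * tpow ((x - 1/b) / L) e) has_integral L powr \<theta> * M * T e) {1/b..1/a}"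
    if "0 \<le> e" for e
    using has_integral_frac_kernel_reciprocal[OF ab \<theta> that]
    unfolding w_def L_def M_def T_def by simp
  have g: "\<bar>f' (1/x)\<bar> \<le> g x" if x: "x \<in> {1/b..1/a}" for x
  proof -
    have "0 \<le> \<tau> x" "\<tau> x \<le> 1"
      unfolding \<tau>_def using x L \<alpha> by (auto intro!: tpow_nonneg tpow_le_one simp: field_simps L_def)
    then show ?thesis
      unfolding g_def using conv[OF x] q K XY m
      by (intro le_Young_bound_of_powr_le) (auto simp: \<tau>_def L_def)
  qed
  have "((\<lambda>x. w x * g x) has_integral c1 * (L powr \<theta> * M * T \<alpha>) + c2 * (L powr \<theta> * M * T 0)) {1/b..1/a}"
    using has_integral_add[OF has_integral_mult_right[OF W[OF \<alpha>], of c1] has_integral_mult_right[OF W[of 0], of c2]]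
  proof (rule has_integral_eq[rotated])
    fix x
    show "c1 * (w x * tpow ((x - 1/b) / L) \<alpha>) + c2 * (w x * tpow ((x - 1/b) / L) 0) = w x * g x"
      unfolding c1_def c2_def g_def \<tau>_def using q K by (simp add: field_simps)
  qed simp
  from I_f_abs_le_of_majorant[OF \<theta> ab f' g this[unfolded w_def]]
  have "\<bar>I_f f \<theta> a b\<bar> \<le> (c1 * (L powr \<theta> * M * T \<alpha>) + c2 * (L powr \<theta> * M * T 0)) / (2 * L powr \<theta>)"
    unfolding L_def .
  also have "\<dots> = M / 2 * (K powr (1/q) * ((X * T \<alpha> + m * Y * (T 0 - T \<alpha>)) / (q * K) + (1 - 1/q) * T 0))"
    unfolding c1_def c2_def using L q K by (simp add: field_simps)
  finally show ?thesis unfolding M_def .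
qed

lemma I_f_abs_le_Young:
  fixes f f' :: "real \<Rightarrow> real"
  assumes \<theta>: "0 < \<theta>" "\<theta> \<le> 1" and ab: "0 < a" "a < b" and \<alpha>: "0 \<le> \<alpha>" "\<alpha> \<le> 1"
    and q: "1 \<le> q" and m: "0 < m" and K: "0 < K" and XY: "0 \<le> X" "0 \<le> Y"
    and f': "\<And>y. y \<in> {a..b} \<Longrightarrow> (f has_real_derivative f' y) (at y)"
    and conv: "\<And>x. x \<in> {1/b..1/a} \<Longrightarrow> \<bar>f' (1/x)\<bar> powr q
       \<le> tpow ((x - 1/b) / (1/a - 1/b)) \<alpha> * X + m * (1 - tpow ((x - 1/b) / (1/a - 1/b)) \<alpha>) * Y"
  shows "\<bar>I_f f \<theta> a b\<bar> \<le> a * b * (b - a) / 2 *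
           (K powr (1/q) * ((C5 \<theta> \<alpha> a b * X + m * C6 \<theta> \<alpha> a b * Y) / (q * K) + (1 - 1/q) * C4 \<theta> a b))"
proof -
  define T where "T e = integral {0..1} (frac_kernel a b \<theta> e)" for e
  have "T \<alpha> \<le> C5 \<theta> \<alpha> a b" "T 0 - T \<alpha> \<le> C6 \<theta> \<alpha> a b" "T 0 \<le> C4 \<theta> a b"
    unfolding T_def C4_eq_C5_zero[OF \<theta>(1) ab]
    using integral_frac_kernel_le_C5 integral_frac_kernel_diff_le_C6 \<theta> ab \<alpha> by auto
  moreover have "0 \<le> m * Y" "0 \<le> 1 - 1/q" using m XY q by auto
  ultimately have "X * T \<alpha> + m * Y * (T 0 - T \<alpha>) \<le> X * C5 \<theta> \<alpha> a b + m * Y * C6 \<theta> \<alpha> a b"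
    and "(1 - 1/q) * T 0 \<le> (1 - 1/q) * C4 \<theta> a b"
    using XY by (auto intro!: add_mono mult_left_mono)
  then have "K powr (1/q) * ((X * T \<alpha> + m * Y * (T 0 - T \<alpha>)) / (q * K) + (1 - 1/q) * T 0)
      \<le> K powr (1/q) * ((C5 \<theta> \<alpha> a b * X + m * C6 \<theta> \<alpha> a b * Y) / (q * K) + (1 - 1/q) * C4 \<theta> a b)"
    using q K by (auto simp: mult_ac intro!: mult_left_mono add_mono divide_right_mono)
  moreover have "0 \<le> a * b * (b - a) / 2" using ab by simp
  ultimately show ?thesis
    using I_f_abs_le_Young_frac_kernel[OF \<theta>(1) ab \<alpha>(1) q m K XY f' conv]
    unfolding T_def by (meson mult_left_mono order_trans)
qed

lemma has_real_derivative_deriv_between: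
  fixes f :: "real \<Rightarrow> real"
  assumes "is_interval I" "\<forall>x\<in>interior I. f differentiable (at x)" "a \<in> interior I" "c \<in> interior I"
    and "y \<in> {a..c}"
  shows "(f has_real_derivative deriv f y) (at y)"
proof -
  have "closed_segment a c \<subseteq> interior I"
    using assms(1,3,4) by (intro convex_contains_segment[THEN iffD1, rule_format] convex_interior is_interval_convex)
  then have "y \<in> interior I" using assms(5) by (auto simp: closed_segment_eq_real_ivl)
  then show ?thesis using assms(2) by (simp add: DERIV_deriv_iff_real_differentiable)
qed

text \<open>The infimum over \<open>K > 0\<close> of the right-hand side is \<open>C^(1-1/q) N^(1/q)\<close>, attained at \<open>K = N/C\<close>.\<close>
lemma le_of_forall_Young_bound:
  fixes z A N C q :: real
  assumes bound: "\<And>K. 0 < K \<Longrightarrow> z \<le> A * (K powr (1/q) * (N / (q * K) + (1 - 1/q) * C))"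
    and "0 \<le> A" "0 \<le> N" "0 < N \<Longrightarrow> 0 < C" "1 \<le> q"
  shows "z \<le> A * (C powr (1 - 1/q) * N powr (1/q))"
proof (cases "N = 0")
  case True
  define c where "c = \<bar>A * (1 - 1/q) * C\<bar>"
  have c: "0 \<le> c" unfolding c_def by simp
  have z: "z \<le> c * \<delta>" if "0 < \<delta>" for \<delta>
  proof -
    have "z \<le> A * ((\<delta> powr q) powr (1/q) * (N / (q * \<delta> powr q) + (1 - 1/q) * C))"
      using bound[of "\<delta> powr q"] that by simp
    also have "(\<delta> powr q) powr (1/q) = \<delta>" using assms(5) that by (simp add: powr_powr)
    finally have "z \<le> A * (1 - 1/q) * C * \<delta>" using True by (simp add: mult_ac)
    also have "\<dots> \<le> c * \<delta>" unfolding c_def using that by (intro mult_right_mono) auto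
    finally show ?thesis .
  qed
  have "z \<le> 0 + e" if "0 < e" for e
  proof -
    have "z \<le> c * (e / (c + 1))" using z[of "e / (c + 1)"] c that by simp
    also have "\<dots> \<le> e" using c that by (simp add: field_simps)
    finally show ?thesis by simp
  qed
  then have "z \<le> 0" by (rule field_le_epsilon)
  then show ?thesis using True by simp
next
  case False
  then have N: "0 < N" and C: "0 < C" using assms by auto
  have "z \<le> A * ((N / C) powr (1/q) * (N / (q * (N / C)) + (1 - 1/q) * C))"
    using bound[of "N / C"] N C by simp
  also have "N / (q * (N / C)) + (1 - 1/q) * C = C"
    using N C assms(5) by (simp add: field_simps)
  also have "(N / C) powr (1/q) * C = C powr (1 - 1/q) * N powr (1/q)"
    using N C by (simp add: powr_divide powr_diff)
  finally show ?thesis .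
qed

theorem theorem6:
  fixes f :: "real \<Rightarrow> real" and I :: "real set"
    and m \<alpha> q \<theta> a b :: real
  assumes "is_interval I" and "I \<subseteq> {0<..}"
    and "\<forall>x\<in>interior I. f differentiable (at x)"
    and "0 < m" "m \<le> 1" and "0 \<le> \<alpha>" "\<alpha> \<le> 1" and "1 \<le> q"
    and "0 < \<theta>" "\<theta> \<le> 1"
    and "a < b" and "a \<in> interior I" "b / m \<in> interior I"
    and "deriv f absolutely_integrable_on {a..b}"
    and "harm_alpha_m_convex_on {a..b/m} \<alpha> m (\<lambda>x. \<bar>deriv f x\<bar> powr q)"
  shows "\<bar>I_f f \<theta> a b\<bar> \<le> a * b * (b - a) / 2 * C4 \<theta> a b powr (1 - 1 / q)
           * (C5 \<theta> \<alpha> a b * \<bar>deriv f a\<bar> powr q + m * C6 \<theta> \<alpha> a b * \<bar>deriv f (b / m)\<bar> powr q) powr (1 / q)"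
proof -
  define N where "N = C5 \<theta> \<alpha> a b * \<bar>deriv f a\<bar> powr q + m * C6 \<theta> \<alpha> a b * \<bar>deriv f (b / m)\<bar> powr q"
  have a: "0 < a" using assms(2,12) interior_subset by fastforce
  have "b \<le> b / m" using assms(4,5,11) a by (simp add: le_divide_eq mult_left_le)
  then have f': "(f has_real_derivative deriv f y) (at y)" if "y \<in> {a..b}" for y
    using that assms(11) by (intro has_real_derivative_deriv_between[OF assms(1,3,12,13)]) auto
  have conv: "\<bar>deriv f (1/x)\<bar> powr q \<le> tpow ((x - 1/b) / (1/a - 1/b)) \<alpha> * \<bar>deriv f a\<bar> powr q
      + m * (1 - tpow ((x - 1/b) / (1/a - 1/b)) \<alpha>) * \<bar>deriv f (b/m)\<bar> powr q"
    if "x \<in> {1/b..1/a}" for x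
    using harm_alpha_m_convex_on_reciprocal[OF assms(15) a assms(11,4,5) that] by simp
  have C: "0 \<le> C5 \<theta> \<alpha> a b" "0 \<le> C6 \<theta> \<alpha> a b" "C4 \<theta> a b = C5 \<theta> \<alpha> a b + C6 \<theta> \<alpha> a b"
    using C5_nonneg C6_nonneg a assms by (auto simp: C6_def)
  then have N: "0 \<le> N" using assms(4) by (simp add: N_def)
  have C4: "0 < C4 \<theta> a b" if "0 < N"
    using C that by (cases "C5 \<theta> \<alpha> a b = 0 \<and> C6 \<theta> \<alpha> a b = 0") (auto simp: N_def)
  have "\<bar>I_f f \<theta> a b\<bar> \<le> a * b * (b - a) / 2 * (C4 \<theta> a b powr (1 - 1/q) * N powr (1/q))"
  proof (rule le_of_forall_Young_bound)
    fix K :: real assume "0 < K"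
    with assms a f' conv show "\<bar>I_f f \<theta> a b\<bar> \<le> a * b * (b - a) / 2 * (K powr (1/q) * (N / (q * K) + (1 - 1/q) * C4 \<theta> a b))"
      unfolding N_def
      by (intro I_f_abs_le_Young) auto
  qed (use assms a N C4 in auto)
  then show ?thesis unfolding N_def by (simp add: mult_ac)
qed

end
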